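(* Let $\nabla$ be an ES basic fusion operator with representing basic assignment $\Phi\mapsto\succeq_\Phi$. The following are equivalent: (i) $\nabla$ satisfies (ESF-I); (ii) for every society $N$, all $N$-profiles $\Phi,\Phi'$ and every $E\in\mathcal E$ with $|[\![B(E)]\!]|\le 2$, if $B(\nabla(E_j,E))\equiv B(\nabla(E'_j,E))$ for all $j\in N$ then $B(\nabla(\Phi,E))\equiv B(\nabla(\Phi',E))$; (iii) for every society $N$, all $N$-profiles $\Phi,\Phi'$ and all interpretations $w,w'$, if $\succeq_{E_i}\upharpoonright_{\{w,w'\}}=\succeq_{E'_i}\upharpoonright_{\{w,w'\}}$ for all $i\in N$ then $\succeq_\Phi\upharpoonright_{\{w,w'\}}=\succeq_{\Phi'}\upharpoonright_{\{w,w'\}}$.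
   Context: Setting: epistemic space $(\mathcal E,B,\mathcal L_{\mathcal P})$ ($\mathcal E$ nonempty, $B:\mathcal E\to$ propositional formulas over finite $\mathcal P$, image modulo equivalence exactly the consistent formulas; $\mathcal W_{\mathcal P}$ valuations, $[\![\phi]\!]$ models); agents: well-ordered set $\mathcal S$; society: nonempty finite $N\subseteq\mathcal S$; $N$-profile $\Phi:N\to\mathcal E$ with $E_i=\Phi(i)$ (and $E'_i=\Phi'(i)$), identified with $E_i$ if $N=\{i\}$; profiles on $\{i_1<\dots<i_n\}$, $\{j_1<\dots<j_m\}$ equivalent if $n=m$ and entries coincide position-wise. ES basic fusion operator: a map $\nabla(\Phi,E)\in\mathcal E$ with (ESF1) $B(\nabla(\Phi,E))\vdash B(E)$; (ESF2) equivalent profiles and $B(E)\equiv B(E')$ give equivalent $B(\nabla)$; (ESF3) if $B(E)\equiv B(E')\wedge B(E'')$ then $B(\nabla(\Phi,E'))\wedge B(E'')\vdash B(\nabla(\Phi,E))$; (ESF4) if moreover $B(\nabla(\Phi,E'))\wedge B(E'')\nvdash\bot$ then $B(\nabla(\Phi,E))\vdash B(\nabla(\Phi,E'))\wedge B(E'')$. Representing basic assignment: the unique $\Phi\mapsto\succeq_\Phi$ (total preorders on $\mathcal W_{\mathcal P}$, equal on equivalent profiles) with $[\![B(\nabla(\Phi,E))]\!]=\max([\![B(E)]\!],\succeq_\Phi)$, $\max(C,\succeq)=\{c\in C:c\succeq x\ \forall x\in C\}$; $\succeq\upharpoonright_C$ denotes restriction of a preorder to $C$. (ESF-I): for every society $N$,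 all $N$-profiles $\Phi,\Phi'$ and every $E$, if for every $E'$ with $B(E')\vdash B(E)$ we have $B(\nabla(E_j,E'))\equiv B(\nabla(E'_j,E'))$ for all $j\in N$, then $B(\nabla(\Phi,E))\equiv B(\nabla(\Phi',E))$. *)

theory Defs
  imports Main
begin

datatype 'p form = Atom 'p | Bot | Neg "'p form" | And "'p form" "'p form" | Or "'p form" "'p form"

text \<open>Interpretations (valuations) are sets of true variables.\<close>
fun models :: "'p form \<Rightarrow> 'p set set" where
  "models (Atom p) = {w. p \<in> w}"
| "models Bot = {}"
| "models (Neg f) = - models f"
| "models (And f g) = models f \<inter> models g"
| "models (Or f g) = models f \<union> models g"

definition entails :: "'p form \<Rightarrow> 'p form \<Rightarrow> bool" (infix "\<turnstile>\<^sub>P" 50) where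
  "f \<turnstile>\<^sub>P g \<longleftrightarrow> models f \<subseteq> models g"

definition equivf :: "'p form \<Rightarrow> 'p form \<Rightarrow> bool" (infix "\<equiv>\<^sub>P" 50) where
  "f \<equiv>\<^sub>P g \<longleftrightarrow> models f = models g"

definition consistent :: "'p form \<Rightarrow> bool" where
  "consistent f \<longleftrightarrow> \<not> (f \<turnstile>\<^sub>P Bot)"

definition epistemic_space :: "('e \<Rightarrow> 'p form) \<Rightarrow> bool" where
  "epistemic_space B \<longleftrightarrow>
     (\<forall>E. consistent (B E)) \<and> (\<forall>f. consistent f \<longrightarrow> (\<exists>E. B E \<equiv>\<^sub>P f))"

text \<open>A profile is a partial map from agents (a well-ordered type) to epistemic states,
  whose domain (the society) is finite and nonempty.\<close>
definition profile :: "('a \<rightharpoonup> 'e) \<Rightarrow> bool" where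
  "profile \<Phi> \<longleftrightarrow> finite (dom \<Phi>) \<and> dom \<Phi> \<noteq> {}"

definition prof_equiv :: "('a::linorder \<rightharpoonup> 'e) \<Rightarrow> ('a \<rightharpoonup> 'e) \<Rightarrow> bool" where
  "prof_equiv \<Phi> \<Psi> \<longleftrightarrow>
     map (\<lambda>i. the (\<Phi> i)) (sorted_list_of_set (dom \<Phi>)) =
     map (\<lambda>i. the (\<Psi> i)) (sorted_list_of_set (dom \<Psi>))"

definition es_basic_fusion ::
  "('e \<Rightarrow> 'p form) \<Rightarrow> (('a::wellorder \<rightharpoonup> 'e) \<Rightarrow> 'e \<Rightarrow> 'e) \<Rightarrow> bool" where
  "es_basic_fusion B fus \<longleftrightarrow>
     (\<forall>\<Phi> E. profile \<Phi> \<longrightarrow> B (fus \<Phi> E) \<turnstile>\<^sub>P B E) \<and>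
     (\<forall>\<Phi> \<Phi>' E E'. profile \<Phi> \<longrightarrow> profile \<Phi>' \<longrightarrow> prof_equiv \<Phi> \<Phi>' \<longrightarrow> B E \<equiv>\<^sub>P B E' \<longrightarrow>
        B (fus \<Phi> E) \<equiv>\<^sub>P B (fus \<Phi>' E')) \<and>
     (\<forall>\<Phi> E E' E''. profile \<Phi> \<longrightarrow> B E \<equiv>\<^sub>P And (B E') (B E'') \<longrightarrow>
        And (B (fus \<Phi> E')) (B E'') \<turnstile>\<^sub>P B (fus \<Phi> E)) \<and>
     (\<forall>\<Phi> E E' E''. profile \<Phi> \<longrightarrow> B E \<equiv>\<^sub>P And (B E') (B E'') \<longrightarrow>
        \<not> (And (B (fus \<Phi> E')) (B E'') \<turnstile>\<^sub>P Bot) \<longrightarrow>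
        B (fus \<Phi> E) \<turnstile>\<^sub>P And (B (fus \<Phi> E')) (B E''))"

text \<open>Total preorders on the set of all interpretations; (w, w') \<in> r means w \<succeq> w'.\<close>
definition total_preorder :: "'w rel \<Rightarrow> bool" where
  "total_preorder r \<longleftrightarrow> refl r \<and> trans r \<and> total_on UNIV r"

definition maxs :: "'w set \<Rightarrow> 'w rel \<Rightarrow> 'w set" where
  "maxs C r = {c \<in> C. \<forall>x \<in> C. (c, x) \<in> r}"

definition restr :: "'w rel \<Rightarrow> 'w set \<Rightarrow> 'w rel" (infixl "\<upharpoonleft>" 60) where
  "r \<upharpoonleft> C = r \<inter> (C \<times> C)"

definition represents ::
  "('e \<Rightarrow> 'p form) \<Rightarrow> (('a::wellorder \<rightharpoonup> 'e) \<Rightarrow> 'e \<Rightarrow> 'e)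
     \<Rightarrow> (('a \<rightharpoonup> 'e) \<Rightarrow> 'p set rel) \<Rightarrow> bool" where
  "represents B fus R \<longleftrightarrow>
     (\<forall>\<Phi>. profile \<Phi> \<longrightarrow> total_preorder (R \<Phi>)) \<and>
     (\<forall>\<Phi> \<Phi>'. profile \<Phi> \<longrightarrow> profile \<Phi>' \<longrightarrow> prof_equiv \<Phi> \<Phi>' \<longrightarrow> R \<Phi> = R \<Phi>') \<and>
     (\<forall>\<Phi> E. profile \<Phi> \<longrightarrow> models (B (fus \<Phi> E)) = maxs (models (B E)) (R \<Phi>))"

end

theory Submission
  imports Defs
begin

text \<open>On a two-element set the maximal elements of a
  reflexive relation determine its restriction, and every nonempty set of interpretations is the
  set of models of some epistemic state; so comparing fusions on bases with two models is the
  same as comparing the preorders pairwise, while on singleton bases all fusions agree.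
  Conversely, the maximal elements on an arbitrary base depend only on these pairwise
  comparisons, which yields (ESF-I).\<close>

fun big_and :: "'p form list \<Rightarrow> 'p form" where
  "big_and [] = Neg Bot"
| "big_and (f # fs) = And f (big_and fs)"

fun big_or :: "'p form list \<Rightarrow> 'p form" where
  "big_or [] = Bot"
| "big_or (f # fs) = Or f (big_or fs)"

lemma models_big_and: "models (big_and fs) = (\<Inter>f\<in>set fs. models f)"
  by (induction fs) auto

lemma models_big_or: "models (big_or fs) = (\<Union>f\<in>set fs. models f)"
  by (induction fs) auto

definition literal :: "'p set \<Rightarrow> 'p \<Rightarrow> 'p form" where
  "literal w p = (if p \<in> w then Atom p else Neg (Atom p))"

lemma models_literal: "v \<in> models (literal w p) \<longleftrightarrow> (p \<in> v \<longleftrightarrow> p \<in> w)"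
  by (simp add: literal_def)

lemma exists_formula_with_models:
  fixes S :: "('p::finite) set set"
  shows "\<exists>f. models f = S"
proof -
  obtain ps :: "'p list" where ps: "set ps = UNIV"
    using finite_list[of "UNIV :: 'p set"] by auto
  let ?char = "\<lambda>w. big_and (map (literal w) ps)"
  have char: "models (?char w) = {w}" for w
    by (auto simp: models_big_and models_literal ps)
  obtain ws where ws: "set ws = S"
    using finite_list[of S] by auto
  have "models (big_or (map ?char ws)) = S"
    by (simp add: models_big_or char ws)
  then show ?thesis ..
qed

lemma maxs_restr: "maxs C (r \<upharpoonleft> C) = maxs C r"
  unfolding maxs_def restr_def by blast

lemma maxs_singleton: "refl r \<Longrightarrow> maxs {w} r = {w}"
  unfolding maxs_def by (auto dest: refl_onD)

lemma restr_eq_if_restr_pairs_eq: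
  assumes "\<And>w w'. w \<in> C \<Longrightarrow> w' \<in> C \<Longrightarrow> r \<upharpoonleft> {w, w'} = r' \<upharpoonleft> {w, w'}"
  shows "r \<upharpoonleft> C = r' \<upharpoonleft> C"
proof -
  have "(w, w') \<in> r \<longleftrightarrow> (w, w') \<in> r'" if "w \<in> C" "w' \<in> C" for w w'
    using assms[OF that] unfolding restr_def by blast
  then show ?thesis
    unfolding restr_def by auto
qed

lemma restr_pair_eq_iff_maxs_eq:
  assumes "refl r" "refl r'"
  shows "r \<upharpoonleft> {w, w'} = r' \<upharpoonleft> {w, w'} \<longleftrightarrow> maxs {w, w'} r = maxs {w, w'} r'"
proof
  assume "r \<upharpoonleft> {w, w'} = r' \<upharpoonleft> {w, w'}"
  then show "maxs {w, w'} r = maxs {w, w'} r'"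
    by (metis maxs_restr)
next
  assume maxs_eq: "maxs {w, w'} r = maxs {w, w'} r'"
  have "(a, b) \<in> r \<longleftrightarrow> (a, b) \<in> r'" if "a \<in> {w, w'}" "b \<in> {w, w'}" for a b
  proof (cases "a = b")
    case True
    then show ?thesis
      using assms by (auto dest: refl_onD)
  next
    case False
    then have "a \<in> maxs {w, w'} s \<longleftrightarrow> (a, b) \<in> s" if "refl s" for s
      using \<open>a \<in> {w, w'}\<close> \<open>b \<in> {w, w'}\<close> that unfolding maxs_def by (auto dest: refl_onD)
    then show ?thesis
      using assms maxs_eq by metis
  qed
  then show "r \<upharpoonleft> {w, w'} = r' \<upharpoonleft> {w, w'}"
    unfolding restr_def by auto
qed

lemma subset_of_card_le_2:
  assumes "finite A" "card A \<le> 2" "C \<subseteq> A" "C \<noteq> {}"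
  obtains "C = A" | w where "C = {w}"
proof (cases "C = A")
  case False
  then have "card C < card A"
    using assms by (simp add: psubset_card_mono psubsetI)
  moreover have "card C \<noteq> 0"
    using assms finite_subset card_0_eq by metis
  ultimately have "card C = 1"
    using assms(2) by linarith
  then show thesis
    using that(2) card_1_singletonE by blast
qed (use that in blast)

lemma profile_singleton: "profile [i \<mapsto> e]"
  unfolding profile_def by simp

lemma profile_if_dom_eq: "profile \<Phi> \<Longrightarrow> dom \<Psi> = dom \<Phi> \<Longrightarrow> profile \<Psi>"
  unfolding profile_def by simp

definition fusion_independence :: "('e \<Rightarrow> 'p form) \<Rightarrow> (('a::wellorder \<rightharpoonup> 'e) \<Rightarrow> 'e \<Rightarrow> 'e) \<Rightarrow> bool"
  where "fusion_independence B fus \<longleftrightarrow> (\<forall>\<Phi> \<Phi>' E. profile \<Phi> \<longrightarrow> dom \<Phi>' = dom \<Phi> \<longrightarrow>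
     (\<forall>E'. B E' \<turnstile>\<^sub>P B E \<longrightarrow>
        (\<forall>j \<in> dom \<Phi>. B (fus [j \<mapsto> the (\<Phi> j)] E') \<equiv>\<^sub>P B (fus [j \<mapsto> the (\<Phi>' j)] E'))) \<longrightarrow>
     B (fus \<Phi> E) \<equiv>\<^sub>P B (fus \<Phi>' E))"

definition fusion_independence_small ::
    "('e \<Rightarrow> 'p form) \<Rightarrow> (('a::wellorder \<rightharpoonup> 'e) \<Rightarrow> 'e \<Rightarrow> 'e) \<Rightarrow> bool"
  where "fusion_independence_small B fus \<longleftrightarrow> (\<forall>\<Phi> \<Phi>' E. profile \<Phi> \<longrightarrow> dom \<Phi>' = dom \<Phi> \<longrightarrow>
     card (models (B E)) \<le> 2 \<longrightarrow>
     (\<forall>j \<in> dom \<Phi>. B (fus [j \<mapsto> the (\<Phi> j)] E) \<equiv>\<^sub>P B (fus [j \<mapsto> the (\<Phi>' j)] E)) \<longrightarrow>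
     B (fus \<Phi> E) \<equiv>\<^sub>P B (fus \<Phi>' E))"

definition pairwise_independence :: "(('a \<rightharpoonup> 'e) \<Rightarrow> 'w rel) \<Rightarrow> bool"
  where "pairwise_independence R \<longleftrightarrow> (\<forall>\<Phi> \<Phi>' w w'. profile \<Phi> \<longrightarrow> dom \<Phi>' = dom \<Phi> \<longrightarrow>
     (\<forall>i \<in> dom \<Phi>. R [i \<mapsto> the (\<Phi> i)] \<upharpoonleft> {w, w'} = R [i \<mapsto> the (\<Phi>' i)] \<upharpoonleft> {w, w'}) \<longrightarrow>
     R \<Phi> \<upharpoonleft> {w, w'} = R \<Phi>' \<upharpoonleft> {w, w'})"

locale represented_fusion =
  fixes B :: "'e \<Rightarrow> ('p::finite) form"
    and fus :: "('a::wellorder \<rightharpoonup> 'e) \<Rightarrow> 'e \<Rightarrow> 'e"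
    and R :: "('a \<rightharpoonup> 'e) \<Rightarrow> 'p set rel"
  assumes epistemic_space: "epistemic_space B"
    and represents: "represents B fus R"
begin

lemma refl_assignment: "profile \<Phi> \<Longrightarrow> refl (R \<Phi>)"
  using represents unfolding represents_def total_preorder_def by blast

lemma models_fus: "profile \<Phi> \<Longrightarrow> models (B (fus \<Phi> E)) = maxs (models (B E)) (R \<Phi>)"
  using represents unfolding represents_def by blast

lemma models_nonempty: "models (B E) \<noteq> {}"
  using epistemic_space unfolding epistemic_space_def consistent_def entails_def by auto

lemma exists_state_with_models:
  assumes "S \<noteq> {}"
  obtains E where "models (B E) = S"
proof -
  obtain f where f: "models f = S"
    using exists_formula_with_models by blast
  then have "consistent f"
    using assms unfolding consistent_def entails_def by auto
  then obtain E where "B E \<equiv>\<^sub>P f"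
    using epistemic_space unfolding epistemic_space_def by blast
  then show thesis
    using f that unfolding equivf_def by simp
qed

lemma fus_equiv_if_restr_eq:
  assumes "profile \<Phi>" "profile \<Psi>" "R \<Phi> \<upharpoonleft> models (B E) = R \<Psi> \<upharpoonleft> models (B E)"
  shows "B (fus \<Phi> E) \<equiv>\<^sub>P B (fus \<Psi> E)"
  unfolding equivf_def models_fus[OF assms(1)] models_fus[OF assms(2)]
  by (metis assms(3) maxs_restr)

lemma fus_equiv_iff_restr_eq_pair:
  assumes "profile \<Phi>" "profile \<Psi>" "models (B E) = {w, w'}"
  shows "B (fus \<Phi> E) \<equiv>\<^sub>P B (fus \<Psi> E) \<longleftrightarrow> R \<Phi> \<upharpoonleft> {w, w'} = R \<Psi> \<upharpoonleft> {w, w'}"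
  unfolding equivf_def models_fus[OF assms(1)] models_fus[OF assms(2)] assms(3)
  using restr_pair_eq_iff_maxs_eq[OF refl_assignment[OF assms(1)] refl_assignment[OF assms(2)]]
  by simp

lemma fus_equiv_singleton:
  assumes "profile \<Phi>" "profile \<Psi>" "models (B E) = {w}"
  shows "B (fus \<Phi> E) \<equiv>\<^sub>P B (fus \<Psi> E)"
  unfolding equivf_def models_fus[OF assms(1)] models_fus[OF assms(2)] assms(3)
  by (simp add: maxs_singleton refl_assignment assms)

lemma fusion_independence_small_if_fusion_independence:
  assumes "fusion_independence B fus"
  shows "fusion_independence_small B fus"
  unfolding fusion_independence_small_def
proof (intro allI impI)
  fix \<Phi> \<Phi>' E
  assume \<Phi>: "profile \<Phi>" and dom: "dom \<Phi>' = dom \<Phi>" and card: "card (models (B E)) \<le> 2"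
    and agents: "\<forall>j \<in> dom \<Phi>. B (fus [j \<mapsto> the (\<Phi> j)] E) \<equiv>\<^sub>P B (fus [j \<mapsto> the (\<Phi>' j)] E)"
  have "B (fus [j \<mapsto> the (\<Phi> j)] E') \<equiv>\<^sub>P B (fus [j \<mapsto> the (\<Phi>' j)] E')"
    if "B E' \<turnstile>\<^sub>P B E" "j \<in> dom \<Phi>" for E' j
  proof -
    have "models (B E') \<subseteq> models (B E)"
      using that(1) unfolding entails_def .
    then consider "models (B E') = models (B E)" | w where "models (B E') = {w}"
      by (rule subset_of_card_le_2[OF finite card _ models_nonempty])
    then show ?thesis
    proof cases
      case 1
      then show ?thesis
        using agents that(2) by (simp add: equivf_def models_fus profile_singleton)
    qed (simp add: fus_equiv_singleton profile_singleton)
  qed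
  then show "B (fus \<Phi> E) \<equiv>\<^sub>P B (fus \<Phi>' E)"
    using assms \<Phi> dom unfolding fusion_independence_def by blast
qed

lemma pairwise_independence_if_fusion_independence_small:
  assumes "fusion_independence_small B fus"
  shows "pairwise_independence R"
  unfolding pairwise_independence_def
proof (intro allI impI)
  fix \<Phi> \<Phi>' and w w' :: "'p set"
  assume \<Phi>: "profile \<Phi>" and dom: "dom \<Phi>' = dom \<Phi>"
    and agents: "\<forall>i \<in> dom \<Phi>. R [i \<mapsto> the (\<Phi> i)] \<upharpoonleft> {w, w'} = R [i \<mapsto> the (\<Phi>' i)] \<upharpoonleft> {w, w'}"
  obtain E where E: "models (B E) = {w, w'}"
    using exists_state_with_models[of "{w, w'}"] by blast
  then have "card (models (B E)) \<le> 2"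
    by (simp add: card_insert_if)
  moreover have "\<forall>j \<in> dom \<Phi>. B (fus [j \<mapsto> the (\<Phi> j)] E) \<equiv>\<^sub>P B (fus [j \<mapsto> the (\<Phi>' j)] E)"
    using agents by (simp add: fus_equiv_iff_restr_eq_pair[OF profile_singleton profile_singleton E])
  ultimately have "B (fus \<Phi> E) \<equiv>\<^sub>P B (fus \<Phi>' E)"
    using assms \<Phi> dom unfolding fusion_independence_small_def by blast
  then show "R \<Phi> \<upharpoonleft> {w, w'} = R \<Phi>' \<upharpoonleft> {w, w'}"
    by (simp add: fus_equiv_iff_restr_eq_pair[OF \<Phi> profile_if_dom_eq[OF \<Phi> dom] E])
qed

lemma fusion_independence_if_pairwise_independence:
  assumes "pairwise_independence R"
  shows "fusion_independence B fus"
  unfolding fusion_independence_def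
proof (intro allI impI)
  fix \<Phi> \<Phi>' E
  assume \<Phi>: "profile \<Phi>" and dom: "dom \<Phi>' = dom \<Phi>"
    and agents: "\<forall>E'. B E' \<turnstile>\<^sub>P B E \<longrightarrow>
      (\<forall>j \<in> dom \<Phi>. B (fus [j \<mapsto> the (\<Phi> j)] E') \<equiv>\<^sub>P B (fus [j \<mapsto> the (\<Phi>' j)] E'))"
  have "R \<Phi> \<upharpoonleft> {w, w'} = R \<Phi>' \<upharpoonleft> {w, w'}"
    if "w \<in> models (B E)" "w' \<in> models (B E)" for w w'
  proof -
    obtain E' where E': "models (B E') = {w, w'}"
      using exists_state_with_models[of "{w, w'}"] by blast
    then have "B E' \<turnstile>\<^sub>P B E"
      using that unfolding entails_def by simp
    then have "\<forall>i \<in> dom \<Phi>. R [i \<mapsto> the (\<Phi> i)] \<upharpoonleft> {w, w'} = R [i \<mapsto> the (\<Phi>' i)] \<upharpoonleft> {w, w'}"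
      using agents by (simp add: fus_equiv_iff_restr_eq_pair[OF _ _ E', symmetric] profile_singleton)
    then show ?thesis
      using assms \<Phi> dom unfolding pairwise_independence_def by blast
  qed
  then have "R \<Phi> \<upharpoonleft> models (B E) = R \<Phi>' \<upharpoonleft> models (B E)"
    by (rule restr_eq_if_restr_pairs_eq)
  then show "B (fus \<Phi> E) \<equiv>\<^sub>P B (fus \<Phi>' E)"
    by (rule fus_equiv_if_restr_eq[OF \<Phi> profile_if_dom_eq[OF \<Phi> dom]])
qed

end

theorem mainTheorem11:
  fixes B :: "'e \<Rightarrow> ('p::finite) form"
    and fus :: "('a::wellorder \<rightharpoonup> 'e) \<Rightarrow> 'e \<Rightarrow> 'e"
    and R :: "('a \<rightharpoonup> 'e) \<Rightarrow> 'p set rel"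
  assumes "epistemic_space B"
    and "es_basic_fusion B fus"
    and "represents B fus R"
  defines "ESF_I \<equiv> (\<forall>\<Phi> \<Phi>' E. profile \<Phi> \<longrightarrow> dom \<Phi>' = dom \<Phi> \<longrightarrow>
              (\<forall>E'. B E' \<turnstile>\<^sub>P B E \<longrightarrow>
                 (\<forall>j \<in> dom \<Phi>. B (fus [j \<mapsto> the (\<Phi> j)] E') \<equiv>\<^sub>P B (fus [j \<mapsto> the (\<Phi>' j)] E'))) \<longrightarrow>
              B (fus \<Phi> E) \<equiv>\<^sub>P B (fus \<Phi>' E))"
    and "cond_ii \<equiv> (\<forall>\<Phi> \<Phi>' E. profile \<Phi> \<longrightarrow> dom \<Phi>' = dom \<Phi> \<longrightarrow> card (models (B E)) \<le> 2 \<longrightarrow>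
              (\<forall>j \<in> dom \<Phi>. B (fus [j \<mapsto> the (\<Phi> j)] E) \<equiv>\<^sub>P B (fus [j \<mapsto> the (\<Phi>' j)] E)) \<longrightarrow>
              B (fus \<Phi> E) \<equiv>\<^sub>P B (fus \<Phi>' E))"
    and "cond_iii \<equiv> (\<forall>\<Phi> \<Phi>' (w::'p set) w'. profile \<Phi> \<longrightarrow> dom \<Phi>' = dom \<Phi> \<longrightarrow>
              (\<forall>i \<in> dom \<Phi>. R [i \<mapsto> the (\<Phi> i)] \<upharpoonleft> {w, w'} = R [i \<mapsto> the (\<Phi>' i)] \<upharpoonleft> {w, w'}) \<longrightarrow>
              R \<Phi> \<upharpoonleft> {w, w'} = R \<Phi>' \<upharpoonleft> {w, w'})"
  shows "(ESF_I \<longleftrightarrow> cond_ii) \<and> (cond_ii \<longleftrightarrow> cond_iii)"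
proof -
  interpret represented_fusion B fus R
    using assms(1,3) by unfold_locales
  \<comment> \<open>the axioms (ESF1)--(ESF4) enter only through the representing assignment\<close>
  have "ESF_I = fusion_independence B fus"
    unfolding ESF_I_def fusion_independence_def ..
  moreover have "cond_ii = fusion_independence_small B fus"
    unfolding cond_ii_def fusion_independence_small_def ..
  moreover have "cond_iii = pairwise_independence R"
    unfolding cond_iii_def pairwise_independence_def ..
  ultimately show ?thesis
    using fusion_independence_small_if_fusion_independence
      pairwise_independence_if_fusion_independence_small
      fusion_independence_if_pairwise_independence
    by (simp only:) blast
qed

end
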